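(* Let $n\ge2$, let $P$ be a partial $n$-Metric on a set $X$, and let $\{x_i\}_{i\in\mathbb{N}}$ be a Cauchy sequence in $X$ with special limit $a\in X$. Then for every integer $0\le q\le n-1$, all $b_1,\dots,b_q\in X$ and every $\epsilon>0$ there exists $N\in\mathbb{N}$ such that for all $i_1,\dots,i_{n-q}>N$, $$P(\langle a\rangle^{n-q},b_1,\dots,b_q)-\epsilon<P(x_{i_1},\dots,x_{i_{n-q}},b_1,\dots,b_q)<P(\langle a\rangle^{n-q},b_1,\dots,b_q)+\epsilon.$$
   Context: Notation: $\langle a\rangle^k$ denotes the $k$-tuple $(a,\dots,a)$ inserted into an argument list. A partial $n$-Metric on $X$ is a function $P:X^n\to\mathbb{R}$ such that for all $x_1,\dots,x_n,a\in X$: (1) $P(\langle x_1\rangle^n)\le P(\langle x_1\rangle^{n-1},x_2)$; (2) $P$ is invariant under permutations of its arguments; (3) $P(\langle x_1\rangle^{n-1},x_2)=P(\langle x_1\rangle^n)$ and $P(\langle x_2\rangle^{n-1},x_1)=P(\langle x_2\rangle^n)$ iff $x_1=x_2$; (4) $P(x_1,\dots,x_n)\le P(x_1,\dots,x_{n-1},a)+P(\langle a\rangle^{n-1},x_n)-P(\langle a\rangle^n)$. A point $a$ is a limit of $\{x_i\}$ iff for every $\epsilon>0$ there is $N$ with $P(\langle a\rangle^{n-1},x_i)-P(\langle a\rangle^n)<\epsilon$ for all $i>N$ (convergence in the topology generated by the balls $\{y\mid P(\langle x\rangle^{n-1},y)-P(\langle x\rangle^n)<\epsilon\}$). $\{x_i\}$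 is Cauchy with central distance $r\in\mathbb{R}$ if for every $\epsilon>0$ there is $N$ such that $|P(x_{i_1},\dots,x_{i_n})-r|<\epsilon$ for all $i_1,\dots,i_n>N$. A special limit of such a sequence is a limit $a$ with $P(\langle a\rangle^n)=r$. *)

theory Defs
  imports "HOL-Library.Multiset" Complex_Main
begin

text \<open>An n-ary function P on X is modelled as a function on lists; only lists of
  length n with entries in X are relevant.  The tuple (x_1,...,x_n) is the list [x_1,...,x_n],
  and the tuple with k copies of a is replicate k a.\<close>

definition partial_n_metric :: "nat \<Rightarrow> 'a set \<Rightarrow> ('a list \<Rightarrow> real) \<Rightarrow> bool" where
  "partial_n_metric n X P \<longleftrightarrow>
     (\<forall>x1\<in>X. \<forall>x2\<in>X. P (replicate n x1) \<le> P (replicate (n - 1) x1 @ [x2])) \<and>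
     (\<forall>xs ys. length xs = n \<and> set xs \<subseteq> X \<and> mset ys = mset xs \<longrightarrow> P ys = P xs) \<and>
     (\<forall>x1\<in>X. \<forall>x2\<in>X.
        (P (replicate (n - 1) x1 @ [x2]) = P (replicate n x1) \<and>
         P (replicate (n - 1) x2 @ [x1]) = P (replicate n x2)) \<longleftrightarrow> x1 = x2) \<and>
     (\<forall>xs a xn. length xs = n - 1 \<and> set xs \<subseteq> X \<and> a \<in> X \<and> xn \<in> X \<longrightarrow>
        P (xs @ [xn]) \<le> P (xs @ [a]) + P (replicate (n - 1) a @ [xn]) - P (replicate n a))"

definition pnm_limit :: "nat \<Rightarrow> ('a list \<Rightarrow> real) \<Rightarrow> (nat \<Rightarrow> 'a) \<Rightarrow> 'a \<Rightarrow> bool" where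
  "pnm_limit n P x a \<longleftrightarrow>
     (\<forall>\<epsilon>>0. \<exists>N. \<forall>i>N. P (replicate (n - 1) a @ [x i]) - P (replicate n a) < \<epsilon>)"

definition pnm_cauchy :: "nat \<Rightarrow> ('a list \<Rightarrow> real) \<Rightarrow> (nat \<Rightarrow> 'a) \<Rightarrow> real \<Rightarrow> bool" where
  "pnm_cauchy n P x r \<longleftrightarrow>
     (\<forall>\<epsilon>>0. \<exists>N. \<forall>is. length is = n \<and> (\<forall>i\<in>set is. i > N) \<longrightarrow> \<bar>P (map x is) - r\<bar> < \<epsilon>)"

definition pnm_special_limit :: "nat \<Rightarrow> ('a list \<Rightarrow> real) \<Rightarrow> (nat \<Rightarrow> 'a) \<Rightarrow> real \<Rightarrow> 'a \<Rightarrow> bool" where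
  "pnm_special_limit n P x r a \<longleftrightarrow> pnm_limit n P x a \<and> P (replicate n a) = r"

end

theory Submission
  imports Defs
begin

text \<open>Write e_a(y) = P(a^{n-1}, y) - P(a^n). Using symmetry, the triangle inequality through a
  point c replaces one argument y by c at cost e_c(y); replacing the n - q sequence entries by a
  one at a time therefore moves P(x_{i_1},...,x_{i_{n-q}}, b) by at most (n - q) max e_a(x_i), and
  replacing the copies of a by the x_i moves it by at most (n - q) max e_{x_i}(a). The first
  excess tends to 0 since a is a limit. For the second, the same replacement gives
  P(x_i^{n-1}, a) \<le> P(a^n) + (n - 1) e_a(x_i), and P(a^n) = r is approximated by P(x_i^n) because
  a is a special limit of a Cauchy sequence with central distance r.\<close>

definition pnm_excess :: "nat \<Rightarrow> ('a list \<Rightarrow> real) \<Rightarrow> 'a \<Rightarrow> 'a \<Rightarrow> real" where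
  "pnm_excess n P a y = P (replicate (n - 1) a @ [y]) - P (replicate n a)"

lemma partial_n_metric_mset_eq:
  assumes "partial_n_metric n X P" "length xs = n" "set xs \<subseteq> X" "mset ys = mset xs"
  shows "P ys = P xs"
  using assms unfolding partial_n_metric_def by blast

lemma partial_n_metric_triangle:
  assumes "partial_n_metric n X P" "length xs = n - 1" "set xs \<subseteq> X" "c \<in> X" "y \<in> X"
  shows "P (xs @ [y]) \<le> P (xs @ [c]) + pnm_excess n P c y"
  using assms unfolding partial_n_metric_def pnm_excess_def by fastforce

lemma partial_n_metric_replace_prefix:
  assumes P: "partial_n_metric n X P"
    and "length ys = length zs" "set ys \<subseteq> X" "set zs \<subseteq> X" "set cs \<subseteq> X"
    and "length ys + length cs = n"
    and "\<forall>(y, z) \<in> set (zip ys zs). pnm_excess n P z y \<le> d"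
  shows "P (ys @ cs) \<le> P (zs @ cs) + real (length ys) * d"
  using assms(2-)
proof (induction ys zs arbitrary: cs rule: list_induct2)
  case Nil
  then show ?case by simp
next
  case (Cons y ys z zs)
  have "P ((y # ys) @ cs) = P ((ys @ cs) @ [y])"
    by (rule partial_n_metric_mset_eq[OF P]) (use Cons.prems in auto)
  also have "\<dots> \<le> P ((ys @ cs) @ [z]) + d"
    using partial_n_metric_triangle[OF P, of "ys @ cs" z y] Cons.prems by auto
  also have "P ((ys @ cs) @ [z]) = P (ys @ (cs @ [z]))"
    by simp
  also have "\<dots> \<le> P (zs @ (cs @ [z])) + real (length ys) * d"
    by (rule Cons.IH) (use Cons.prems in auto)
  also have "P (zs @ (cs @ [z])) = P ((z # zs) @ cs)"
    by (rule partial_n_metric_mset_eq[OF P]) (use Cons.hyps Cons.prems in auto)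
  finally show ?case
    by (simp add: algebra_simps)
qed

lemma partial_n_metric_excess_reverse:
  assumes P: "partial_n_metric n X P" and "n \<ge> 1" "a \<in> X" "y \<in> X"
    and "pnm_excess n P a y \<le> d" and "P (replicate n a) \<le> P (replicate n y) + d"
  shows "pnm_excess n P y a \<le> real n * d"
proof -
  have "P (replicate (n - 1) y @ [a]) \<le> P (replicate (n - 1) a @ [a]) + real (n - 1) * d"
    using partial_n_metric_replace_prefix[OF P, of "replicate (n - 1) y" "replicate (n - 1) a" "[a]" d]
      assms by (auto simp: set_replicate_conv_if)
  also have "replicate (n - 1) a @ [a] = replicate n a"
    using \<open>n \<ge> 1\<close> by (cases n) (simp_all add: replicate_append_same)
  finally show ?thesis
    using assms(2,6) by (simp add: pnm_excess_def algebra_simps)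
qed

lemma special_limit_excesses_eventually:
  assumes P: "partial_n_metric n X P" and "n \<ge> 1" "\<forall>i. x i \<in> X" "a \<in> X"
    and "pnm_cauchy n P x r" "pnm_special_limit n P x r a" "d > 0"
  obtains N where "\<And>i. i > N \<Longrightarrow> pnm_excess n P a (x i) \<le> d"
    and "\<And>i. i > N \<Longrightarrow> pnm_excess n P (x i) a \<le> real n * d"
proof -
  obtain N1 where N1: "\<And>i. i > N1 \<Longrightarrow> pnm_excess n P a (x i) < d"
    using assms(6,7) unfolding pnm_special_limit_def pnm_limit_def pnm_excess_def by blast
  obtain N2 where N2: "\<And>is. length is = n \<Longrightarrow> \<forall>i\<in>set is. i > N2 \<Longrightarrow> \<bar>P (map x is) - r\<bar> < d"
    using assms(5,7) unfolding pnm_cauchy_def by blast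
  have up: "pnm_excess n P a (x i) \<le> d" if "i > max N1 N2" for i
    using N1 that by (simp add: less_imp_le)
  moreover have "pnm_excess n P (x i) a \<le> real n * d" if "i > max N1 N2" for i
  proof -
    have "P (replicate n a) \<le> P (replicate n (x i)) + d"
      using N2[of "replicate n i"] that assms(6) by (simp add: pnm_special_limit_def)
    then show ?thesis
      using partial_n_metric_excess_reverse[OF P assms(2,4)] assms(3) up that by blast
  qed
  ultimately show ?thesis
    using that by blast
qed

theorem theorem4p16:
  fixes n :: nat and X :: "'a set" and P :: "'a list \<Rightarrow> real"
    and x :: "nat \<Rightarrow> 'a" and a :: 'a and r :: real
  assumes "n \<ge> 2"
    and "partial_n_metric n X P"
    and "\<forall>i. x i \<in> X"
    and "a \<in> X"
    and "pnm_cauchy n P x r"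
    and "pnm_special_limit n P x r a"
  shows "\<forall>q. q \<le> n - 1 \<longrightarrow> (\<forall>bs. length bs = q \<and> set bs \<subseteq> X \<longrightarrow>
           (\<forall>\<epsilon>>0. \<exists>N::nat. \<forall>is. length is = n - q \<and> (\<forall>i\<in>set is. i > N) \<longrightarrow>
              P (replicate (n - q) a @ bs) - \<epsilon> < P (map x is @ bs) \<and>
              P (map x is @ bs) < P (replicate (n - q) a @ bs) + \<epsilon>))"
proof (intro allI impI, elim conjE)
  fix q bs and \<epsilon> :: real
  assume "q \<le> n - 1" "length bs = q" "set bs \<subseteq> X" "\<epsilon> > 0"
  define d where "d = \<epsilon> / (real n * real n + 1)"
  have "d > 0" "real n * real n * d < \<epsilon>"
    using \<open>\<epsilon> > 0\<close> by (simp_all add: d_def field_simps add_pos_nonneg)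
  obtain N where up: "\<And>i. i > N \<Longrightarrow> pnm_excess n P a (x i) \<le> d"
    and down: "\<And>i. i > N \<Longrightarrow> pnm_excess n P (x i) a \<le> real n * d"
    using special_limit_excesses_eventually[OF assms(2) _ assms(3-6) \<open>d > 0\<close>] assms(1) by auto
  show "\<exists>N. \<forall>is. length is = n - q \<and> (\<forall>i\<in>set is. i > N) \<longrightarrow>
          P (replicate (n - q) a @ bs) - \<epsilon> < P (map x is @ bs) \<and>
          P (map x is @ bs) < P (replicate (n - q) a @ bs) + \<epsilon>"
  proof (intro exI allI impI, elim conjE)
    fix "is" :: "nat list"
    assume "length is = n - q" and is_large: "\<forall>i\<in>set is. i > N"
    let ?m = "length is"
    have m: "?m + length bs = n" "?m \<le> n" "n - q = ?m"
      using \<open>length is = n - q\<close> \<open>q \<le> n - 1\<close> \<open>length bs = q\<close> by auto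
    have sets: "set (map x is) \<subseteq> X" "set (replicate ?m a) \<subseteq> X"
      using assms(3,4) by (auto simp: set_replicate_conv_if)
    have "P (map x is @ bs) \<le> P (replicate ?m a @ bs) + real ?m * d"
      using partial_n_metric_replace_prefix[OF assms(2), of "map x is" "replicate ?m a" bs d]
        sets m \<open>set bs \<subseteq> X\<close> is_large up by (auto simp: zip_replicate2 zip_map1)
    moreover have "P (replicate ?m a @ bs) \<le> P (map x is @ bs) + real ?m * (real n * d)"
      using partial_n_metric_replace_prefix[OF assms(2), of "replicate ?m a" "map x is" bs "real n * d"]
        sets m \<open>set bs \<subseteq> X\<close> is_large down by (auto simp: zip_replicate1 zip_map2)
    moreover have "real ?m * d \<le> real ?m * (real n * d)" "real ?m * (real n * d) \<le> real n * real n * d"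
      using m \<open>d > 0\<close> assms(1) by (auto intro: mult_left_mono mult_right_mono)
    ultimately show "P (replicate (n - q) a @ bs) - \<epsilon> < P (map x is @ bs) \<and>
          P (map x is @ bs) < P (replicate (n - q) a @ bs) + \<epsilon>"
      using \<open>real n * real n * d < \<epsilon>\<close> unfolding \<open>n - q = ?m\<close> by linarith
  qed
qed

end
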